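(* Let $N\ge 10^{40}$ be real, let $\mathcal{A}=\mathbb{Z}\cap(N,N+3N^{2/3})$, $X=\max\mathcal{A}$, $z=X^{1/5}$ and $y=X^{1/1.85}$. Then $$\sum_{\substack{q\text{ prime}\\ z\le q<y}}|\mathcal{A}_{q^2}|\le 0.03\,|\mathcal{A}|^{0.82}.$$
   Context: For a positive integer $d$, $\mathcal{A}_d=\{a\in\mathcal{A}: d\mid a\}$, and $|\cdot|$ denotes cardinality. *)

theory Defs
  imports "HOL-Analysis.Analysis" "HOL-Computational_Algebra.Primes"
begin

definition setA :: "real \<Rightarrow> int set" where
  "setA N = {a :: int. N < real_of_int a \<and> real_of_int a < N + 3 * N powr (2/3)}"

definition multiples_in :: "int set \<Rightarrow> int \<Rightarrow> int set" where
  "multiples_in A d = {a \<in> A. d dvd a}"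

end

theory Submission
  imports Defs
begin

(*
  An interval (a, b) of length L contains at most L/d + 1 multiples of d, and no multiple
  of q^2 once q^2 >= b. Hence only z <= q <= sqrt b contribute, and summing L/q^2 + 1 gives
  at most L/(z - 1) + sqrt b by telescoping 1/q^2 <= 1/(q - 1) - 1/q. With L = 3 N^(2/3), b = N + L and z >= N^(1/5) this is roughly
  sqrt N <= 0.03 N^(13/24) for N >= 10^40, while |A| >= N^(2/3) and 0.82 * 2/3 > 13/24.
*)

lemma int_Ioo_eq_greaterThanLessThan:
  fixes a b :: real
  shows "{k::int. a < of_int k \<and> of_int k < b} = {\<lfloor>a\<rfloor><..<\<lceil>b\<rceil>}"
  by (auto simp: floor_less_iff less_ceiling_iff)

lemma card_int_Ioo:
  fixes a b :: real
  shows "card {k::int. a < of_int k \<and> of_int k < b} = nat (\<lceil>b\<rceil> - \<lfloor>a\<rfloor> - 1)"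
  by (simp add: int_Ioo_eq_greaterThanLessThan)

lemma card_int_Ioo_ge:
  fixes a b :: real
  shows "b - a - 1 \<le> real (card {k::int. a < of_int k \<and> of_int k < b})"
  unfolding card_int_Ioo by linarith

lemma card_int_Ioo_le:
  fixes a b :: real
  assumes "a \<le> b"
  shows "real (card {k::int. a < of_int k \<and> of_int k < b}) \<le> b - a + 1"
  unfolding card_int_Ioo using assms by linarith

lemma card_multiples_in_int_Ioo_le:
  fixes a b :: real and d :: int
  assumes "0 < d" "a \<le> b"
  shows "real (card (multiples_in {k::int. a < of_int k \<and> of_int k < b} d)) \<le> (b - a) / d + 1"
proof -
  define K where "K = {k::int. a / d < of_int k \<and> of_int k < b / d}"
  have "multiples_in {k::int. a < of_int k \<and> of_int k < b} d \<subseteq> (*) d ` K"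
    using assms(1) by (auto simp: multiples_in_def K_def divide_less_eq less_divide_eq mult.commute elim!: dvdE)
  moreover have "finite K"
    unfolding K_def int_Ioo_eq_greaterThanLessThan by simp
  ultimately have "card (multiples_in {k::int. a < of_int k \<and> of_int k < b} d) \<le> card K"
    by (meson card_image_le card_mono finite_imageI order_trans)
  also have "real (card K) \<le> b / d - a / d + 1"
    unfolding K_def using assms by (intro card_int_Ioo_le divide_right_mono) auto
  finally show ?thesis
    by (simp add: diff_divide_distrib)
qed

lemma multiples_in_int_Ioo_eq_empty:
  fixes a b :: real and d :: int
  assumes "0 \<le> a" "b \<le> of_int d"
  shows "multiples_in {k::int. a < of_int k \<and> of_int k < b} d = {}"
proof -
  have "\<not> d dvd k" if "a < of_int k" "of_int k < b" for k
  proof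
    assume "d dvd k"
    have "0 < real_of_int k" using that assms(1) by linarith
    with \<open>d dvd k\<close> have "d \<le> k" by (simp add: zdvd_imp_le)
    with that assms(2) show False by linarith
  qed
  then show ?thesis by (auto simp: multiples_in_def)
qed

lemma sum_inverse_squares_le:
  assumes "2 \<le> m"
  shows "(\<Sum>k=m..n. 1 / real k ^ 2) \<le> 1 / (real m - 1)"
proof -
  have telescope: "(\<Sum>k=m..n. 1 / real k ^ 2) \<le> 1 / (real m - 1) - 1 / real n" if "m - 1 \<le> n"
    using that
  proof (induction n rule: dec_induct)
    case base
    then show ?case using assms by (simp add: of_nat_diff)
  next
    case (step k)
    have "0 < k" "m \<le> Suc k" using step assms by linarith+
    have "1 / real (Suc k) ^ 2 \<le> 1 / (real k * real (Suc k))"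
      unfolding power2_eq_square using \<open>0 < k\<close> by (intro divide_left_mono mult_right_mono) auto
    also have "\<dots> = 1 / real k - 1 / real (Suc k)"
      using \<open>0 < k\<close> by (simp add: field_simps)
    finally have "1 / real (Suc k) ^ 2 \<le> 1 / real k - 1 / real (Suc k)" .
    with step.IH \<open>m \<le> Suc k\<close> show ?case
      by simp
  qed
  show ?thesis
  proof (cases "m - 1 \<le> n")
    case True
    then show ?thesis
      using telescope divide_nonneg_nonneg[of 1 "real n"] by linarith
  next
    case False
    then show ?thesis using assms by simp
  qed
qed

lemma sum_card_multiples_in_squares_le:
  fixes a b z :: real and Q :: "nat set"
  assumes "0 \<le> a" "a \<le> b" "1 < z" "\<forall>q\<in>Q. z \<le> real q"
  shows "(\<Sum>q\<in>Q. real (card (multiples_in {k::int. a < of_int k \<and> of_int k < b} (int q ^ 2))))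
           \<le> (b - a) / (z - 1) + sqrt b"
proof (cases "finite Q")
  case False
  then show ?thesis using assms by simp
next
  case True
  define c where "c q = real (card (multiples_in {k::int. a < of_int k \<and> of_int k < b} (int q ^ 2)))" for q
  define m where "m = nat \<lceil>z\<rceil>"
  define n where "n = nat \<lfloor>sqrt b\<rfloor>"
  have "z \<le> real m" "2 \<le> m"
    using assms(3) unfolding m_def by linarith+
  have "real n = of_int \<lfloor>sqrt b\<rfloor>"
    using assms(1,2) unfolding n_def by simp
  then have "real n \<le> sqrt b" "sqrt b < real n + 1"
    by linarith+
  have "c q = 0" if "q \<in> Q" "q \<notin> {m..n}" for q
  proof -
    have "m \<le> q" using that assms(4) unfolding m_def by (simp add: nat_le_iff ceiling_le_iff)
    with that have "n < q" by auto
    then have "sqrt b < real q" using \<open>sqrt b < real n + 1\<close> by linarith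
    then have "b \<le> real q ^ 2" by (intro sqrt_le_D less_imp_le)
    then show ?thesis unfolding c_def using assms(1) by (subst multiples_in_int_Ioo_eq_empty) auto
  qed
  then have "(\<Sum>q\<in>Q. c q) = (\<Sum>q\<in>Q \<inter> {m..n}. c q)"
    using True by (intro sum.mono_neutral_right) auto
  also have "\<dots> \<le> (\<Sum>q=m..n. c q)"
    by (intro sum_mono2) (auto simp: c_def)
  also have "\<dots> \<le> (\<Sum>q=m..n. (b - a) / real q ^ 2 + 1)"
  proof (rule sum_mono)
    fix q assume "q \<in> {m..n}"
    then have "0 < q" using \<open>2 \<le> m\<close> by simp
    then show "c q \<le> (b - a) / real q ^ 2 + 1"
      unfolding c_def using card_multiples_in_int_Ioo_le[OF _ assms(2), of "int q ^ 2"] by simp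
  qed
  also have "\<dots> = (b - a) * (\<Sum>q=m..n. 1 / real q ^ 2) + real (card {m..n})"
    by (simp add: sum.distrib sum_distrib_left)
  also have "\<dots> \<le> (b - a) / (z - 1) + sqrt b"
  proof -
    have "(b - a) * (\<Sum>q=m..n. 1 / real q ^ 2) \<le> (b - a) * (1 / (real m - 1))"
      using sum_inverse_squares_le[OF \<open>2 \<le> m\<close>] assms(2) by (intro mult_left_mono) auto
    also have "\<dots> \<le> (b - a) / (z - 1)"
      using assms(2,3) \<open>z \<le> real m\<close> by (simp add: divide_left_mono)
    finally show ?thesis using \<open>real n \<le> sqrt b\<close> \<open>2 \<le> m\<close> by simp
  qed
  finally show ?thesis unfolding c_def .
qed

lemma le_powr_inverse_of_power_le:
  fixes c x :: real
  assumes "0 \<le> c" "0 < k" "c ^ k \<le> x"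
  shows "c \<le> x powr (1 / real k)"
proof (cases "c = 0")
  case False
  then have "c = (c ^ k) powr (1 / real k)"
    using assms(1,2) by (simp add: powr_realpow[symmetric] powr_powr)
  also have "\<dots> \<le> x powr (1 / real k)"
    using assms by (intro powr_mono2) auto
  finally show ?thesis .
qed simp

lemma sieve_bound_le_powr:
  fixes N z :: real
  assumes N: "10 ^ 40 \<le> N" and z: "N powr (1/5) \<le> z"
  shows "3 * N powr (2/3) / (z - 1) + sqrt (N + 3 * N powr (2/3)) \<le> 0.03 * N powr (13/24)"
proof -
  have "0 < N" using N by (smt (verit) zero_less_power)
  have root3: "10000 \<le> N powr (1/3)" using le_powr_inverse_of_power_le[of 10000 3 N] N by simp
  have root5: "10 ^ 8 \<le> N powr (1/5)" using le_powr_inverse_of_power_le[of "10 ^ 8" 5 N] N by simp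
  have root24: "46 \<le> N powr (1/24)" using le_powr_inverse_of_power_le[of 46 24 N] N by simp
  have root30: "21 \<le> N powr (1/30)" using le_powr_inverse_of_power_le[of 21 30 N] N by simp
  have "3 * N powr (2/3) / (z - 1) \<le> 3 * N powr (2/3) / (N powr (1/5) / 2)"
    using z root5 by (intro divide_left_mono mult_pos_pos) auto
  also have "\<dots> = 6 * N powr (2/3) / N powr (1/5)"
    by simp
  also have "\<dots> = 6 * N powr (1/2) / N powr (1/30)"
    using \<open>0 < N\<close> by (simp add: field_simps flip: powr_add)
  also have "\<dots> \<le> 6 * N powr (1/2) / 21"
    using root30 by (intro divide_left_mono) auto
  finally have first: "3 * N powr (2/3) / (z - 1) \<le> 6 * N powr (1/2) / 21" .
  have "N powr (2/3) * 10000 \<le> N powr (2/3) * N powr (1/3)"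
    using root3 by (intro mult_left_mono) auto
  also have "\<dots> = N"
    using \<open>0 < N\<close> by (simp flip: powr_add)
  finally have "3 * N powr (2/3) \<le> N / 1000"
    using powr_ge_zero[of N "2/3"] by linarith
  then have "N + 3 * N powr (2/3) \<le> (1.001 * sqrt N) ^ 2"
    using \<open>0 < N\<close> by (simp add: power_mult_distrib power_divide)
  then have "sqrt (N + 3 * N powr (2/3)) \<le> 1.001 * sqrt N"
    using \<open>0 < N\<close> by (intro real_le_lsqrt) simp_all
  then have second: "sqrt (N + 3 * N powr (2/3)) \<le> 1.001 * N powr (1/2)"
    using \<open>0 < N\<close> by (simp add: powr_half_sqrt)
  have "(6 / 21 + 1.001) * N powr (1/2) \<le> 0.03 * N powr (1/24) * N powr (1/2)"
    using root24 by (intro mult_right_mono) auto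
  also have "\<dots> = 0.03 * N powr (13/24)"
    using \<open>0 < N\<close> by (simp flip: powr_add)
  finally show ?thesis using first second by simp
qed

lemma finite_setA: "finite (setA N)"
  unfolding setA_def int_Ioo_eq_greaterThanLessThan by simp

lemma card_setA_ge:
  assumes "1 \<le> N"
  shows "N powr (2/3) \<le> real (card (setA N))"
proof -
  have "1 \<le> N powr (2/3)"
    using assms by (simp add: ge_one_powr_ge_zero)
  moreover have "3 * N powr (2/3) - 1 \<le> real (card (setA N))"
    using card_int_Ioo_ge[where a = N and b = "N + 3 * N powr (2/3)"] unfolding setA_def by simp
  ultimately show ?thesis by linarith
qed

theorem lemma4p3:
  fixes N :: real
  assumes "N \<ge> 10 ^ 40"
  defines "X \<equiv> real_of_int (Max (setA N))"
  defines "z \<equiv> X powr (1/5)"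
  defines "y \<equiv> X powr (1/1.85)"
  shows "(\<Sum>q \<in> {q :: nat. prime q \<and> z \<le> real q \<and> real q < y}.
            real (card (multiples_in (setA N) (int q ^ 2))))
         \<le> 0.03 * real (card (setA N)) powr 0.82"
proof -
  have "1 < N" using assms(1) by (rule less_le_trans[rotated]) simp
  then have card_A: "N powr (2/3) \<le> real (card (setA N))"
    by (intro card_setA_ge) simp
  then have "setA N \<noteq> {}"
    using \<open>1 < N\<close> by (auto simp: gr_one_powr)
  then have "N < X"
    using Max_in[OF finite_setA] unfolding X_def setA_def by auto
  then have "N powr (1/5) \<le> z" "1 < z"
    using \<open>1 < N\<close> unfolding z_def by (auto intro: powr_mono2)
  then have "(\<Sum>q \<in> {q. prime q \<and> z \<le> real q \<and> real q < y}. real (card (multiples_in (setA N) (int q ^ 2))))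
               \<le> 3 * N powr (2/3) / (z - 1) + sqrt (N + 3 * N powr (2/3))"
    using sum_card_multiples_in_squares_le[where a = N and b = "N + 3 * N powr (2/3)"] \<open>1 < N\<close>
    unfolding setA_def by simp
  also have "\<dots> \<le> 0.03 * N powr (13/24)"
    using assms(1) \<open>N powr (1/5) \<le> z\<close> by (rule sieve_bound_le_powr)
  also have "\<dots> \<le> 0.03 * (N powr (2/3)) powr 0.82"
    using \<open>1 < N\<close> by (simp add: powr_powr powr_mono)
  also have "\<dots> \<le> 0.03 * real (card (setA N)) powr 0.82"
    using card_A by (simp add: powr_mono2)
  finally show ?thesis .
qed

end
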